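(* For every fixed positive integer $q$ there is a constant $C_q$ such that for every $k\ge q$ there exists a set of uniqueness for $(\mathcal{B}^k_q)_+$ with at most $C_q\,k^{\lfloor q/2\rfloor}$ elements; that is, there exist sets of uniqueness for $(\mathcal{B}^k_q)_+$ of size $O(k^{\lfloor q/2\rfloor})$.
   Context: Let $\mathcal{X}=\{-1,+1\}^k$. For $L\subseteq\{1,\ldots,k\}$ let $w_L(x)=\prod_{j\in L}x_j$ (with $w_\emptyset\equiv 1$). For $1\le q\le k$, $\mathcal{B}^k_q$ is the linear span of $\{w_L: |L|\le q\}$ in the space of real functions on $\mathcal{X}$, and $(\mathcal{B}^k_q)_+=\{\varphi\in\mathcal{B}^k_q:\ \varphi\ge 0\}$. A set $U\subseteq\mathcal{X}$ is a set of uniqueness for $(\mathcal{B}^k_q)_+$ if the only $\varphi\in(\mathcal{B}^k_q)_+$ vanishing on $U$ is $\varphi\equiv0$. *)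

theory Defs
  imports "HOL-Analysis.Analysis"
begin

text \<open>The cube X = {-1,+1}^k, points represented as functions nat => real,
  with coordinates indexed by {1..k} and all other coordinates equal to 0.\<close>
definition cube :: "nat \<Rightarrow> (nat \<Rightarrow> real) set" where
  "cube k = {x. (\<forall>j\<in>{1..k}. x j = -1 \<or> x j = 1) \<and> (\<forall>j. j \<notin> {1..k} \<longrightarrow> x j = 0)}"

definition walsh :: "nat set \<Rightarrow> (nat \<Rightarrow> real) \<Rightarrow> real" where
  "walsh L x = (\<Prod>j\<in>L. x j)"

text \<open>B^k_q: real functions on the cube lying in the linear span of the w_L with
  L a subset of {1..k}, |L| <= q. Functions are compared on the cube only.\<close>
definition Bkq :: "nat \<Rightarrow> nat \<Rightarrow> ((nat \<Rightarrow> real) \<Rightarrow> real) set" where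
  "Bkq k q = {\<phi>. \<exists>c :: nat set \<Rightarrow> real. \<forall>x\<in>cube k.
      \<phi> x = (\<Sum>L\<in>{L. L \<subseteq> {1..k} \<and> card L \<le> q}. c L * walsh L x)}"

definition Bkq_plus :: "nat \<Rightarrow> nat \<Rightarrow> ((nat \<Rightarrow> real) \<Rightarrow> real) set" where
  "Bkq_plus k q = {\<phi>\<in>Bkq k q. \<forall>x\<in>cube k. \<phi> x \<ge> 0}"

definition uniqueness_set :: "nat \<Rightarrow> nat \<Rightarrow> (nat \<Rightarrow> real) set \<Rightarrow> bool" where
  "uniqueness_set k q U \<longleftrightarrow> U \<subseteq> cube k \<and>
     (\<forall>\<phi>\<in>Bkq_plus k q. (\<forall>x\<in>U. \<phi> x = 0) \<longrightarrow> (\<forall>x\<in>cube k. \<phi> x = 0))"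

end

theory Submission
  imports Defs "HOL-Computational_Algebra.Polynomial"
begin

text \<open>
  Let U be the points of the cube with at most r = q div 2 coordinates of one of the two signs;
  there are O(k^r) of them. For \<phi> in B^k_q, the sum of \<phi> against the Riesz product
  \<Prod>j (1 + t x_j) is a polynomial in t of degree at most q, since the Riesz product integrates
  w_L to 2^k t^|L|. If \<phi> vanishes on U, only points with at least r + 1 coordinates of each sign
  contribute, and each of them contributes a multiple of ((1 + t)(1 - t))^(r+1), of degree
  2r + 2 > q. So that polynomial is zero, and its value at t = 0, the sum of \<phi> over the cube,
  vanishes; a nonnegative \<phi> is then identically zero.
\<close>

lemma cube_0: "cube 0 = {\<lambda>_. 0}"
  by (auto simp: cube_def)

lemma cube_Suc: "cube (Suc k) = (\<lambda>(x, s). x(Suc k := s)) ` (cube k \<times> {-1, 1})"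
proof (intro set_eqI iffI)
  fix y assume y: "y \<in> cube (Suc k)"
  then have "(y(Suc k := 0), y (Suc k)) \<in> cube k \<times> {-1, 1}"
    by (auto simp: cube_def)
  then show "y \<in> (\<lambda>(x, s). x(Suc k := s)) ` (cube k \<times> {-1, 1})"
    by (rule rev_image_eqI) simp
qed (fastforce simp: cube_def le_Suc_eq)

lemma inj_on_cube_Suc: "inj_on (\<lambda>(x, s). x(Suc k := s)) (cube k \<times> {-1, 1})"
proof (intro inj_onI, clarify)
  fix x s x' s' assume x: "x \<in> cube k" "x' \<in> cube k" and eq: "x(Suc k := s) = x'(Suc k := s')"
  have "x (Suc k) = x' (Suc k)" using x by (simp add: cube_def)
  then show "x = x' \<and> s = s'" using eq by (metis fun_upd_idem fun_upd_same fun_upd_upd)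
qed

lemma finite_cube: "finite (cube k)"
  by (induction k) (auto simp: cube_0 cube_Suc)

lemma sum_cube_Suc:
  "(\<Sum>y\<in>cube (Suc k). f y) = (\<Sum>x\<in>cube k. f (x(Suc k := 1)) + f (x(Suc k := -1)))"
proof -
  have "(\<Sum>y\<in>cube (Suc k). f y) = (\<Sum>(x, s)\<in>cube k \<times> {-1, 1}. f (x(Suc k := s)))"
    unfolding cube_Suc by (subst sum.reindex[OF inj_on_cube_Suc]) (simp add: case_prod_unfold)
  also have "\<dots> = (\<Sum>x\<in>cube k. \<Sum>s\<in>{-1, 1}. f (x(Suc k := s)))"
    by (rule sum.cartesian_product[symmetric])
  finally show ?thesis by (simp add: add.commute)
qed

lemma sum_cube_prod:
  fixes f :: "nat \<Rightarrow> real \<Rightarrow> 'a::comm_semiring_1"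
  shows "(\<Sum>x\<in>cube k. \<Prod>j=1..k. f j (x j)) = (\<Prod>j=1..k. f j 1 + f j (-1))"
proof (induction k)
  case 0
  then show ?case by (simp add: cube_0)
next
  case (Suc k)
  have prod_upd: "(\<Prod>j=1..Suc k. f j ((x(Suc k := s)) j)) = (\<Prod>j=1..k. f j (x j)) * f (Suc k) s"
    for x s by (simp add: atLeastAtMostSuc_conv mult.commute)
  have "(\<Sum>x\<in>cube (Suc k). \<Prod>j=1..Suc k. f j (x j))
      = (\<Sum>x\<in>cube k. \<Prod>j=1..k. f j (x j)) * (f (Suc k) 1 + f (Suc k) (-1))"
    by (simp add: sum_cube_Suc prod_upd sum_distrib_right flip: distrib_left)
  also have "\<dots> = (\<Prod>j=1..Suc k. f j 1 + f j (-1))"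
    by (subst Suc.IH) (simp add: atLeastAtMostSuc_conv mult.commute)
  finally show ?case .
qed

definition riesz_product :: "real \<Rightarrow> nat \<Rightarrow> (nat \<Rightarrow> real) \<Rightarrow> real" where
  "riesz_product t k x = (\<Prod>j=1..k. 1 + t * x j)"

lemma sum_cube_riesz_product_walsh:
  assumes "L \<subseteq> {1..k}"
  shows "(\<Sum>x\<in>cube k. riesz_product t k x * walsh L x) = 2 ^ k * t ^ card L"
proof -
  have walsh_eq: "walsh L x = (\<Prod>j=1..k. if j \<in> L then x j else 1)" for x
    using prod.inter_restrict[of "{1..k}" x L] assms by (simp add: walsh_def Int_absorb1)
  have "(\<Sum>x\<in>cube k. riesz_product t k x * walsh L x)
      = (\<Sum>x\<in>cube k. \<Prod>j=1..k. (1 + t * x j) * (if j \<in> L then x j else 1))"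
    by (simp add: riesz_product_def walsh_eq prod.distrib)
  also have "\<dots> = (\<Prod>j=1..k. if j \<in> L then 2 * t else 2)"
    by (subst sum_cube_prod) (auto intro: prod.cong)
  also have "\<dots> = (\<Prod>j=1..k. 2) * (\<Prod>j=1..k. if j \<in> L then t else 1)"
    by (subst prod.distrib[symmetric]) (auto intro: prod.cong)
  also have "\<dots> = 2 ^ k * t ^ card L"
    using prod.inter_restrict[of "{1..k}" "\<lambda>_. t" L] assms by (simp add: Int_absorb1)
  finally show ?thesis .
qed

definition sign_count :: "nat \<Rightarrow> real \<Rightarrow> (nat \<Rightarrow> real) \<Rightarrow> nat" where
  "sign_count k v x = card {j\<in>{1..k}. x j = v}"

lemma riesz_product_cube:
  assumes "x \<in> cube k"
  shows "riesz_product t k x = (1 + t) ^ sign_count k 1 x * (1 - t) ^ sign_count k (-1) x"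
proof -
  have split: "{1..k} = {j\<in>{1..k}. x j = 1} \<union> {j\<in>{1..k}. x j = -1}"
    using assms by (auto simp: cube_def)
  have "riesz_product t k x
      = (\<Prod>j\<in>{j\<in>{1..k}. x j = 1}. 1 + t * x j) * (\<Prod>j\<in>{j\<in>{1..k}. x j = -1}. 1 + t * x j)"
    unfolding riesz_product_def by (subst split, rule prod.union_disjoint) auto
  then show ?thesis
    by (simp add: sign_count_def)
qed

lemma Bkq_riesz_sum_poly:
  assumes "\<phi> \<in> Bkq k q"
  obtains p :: "real poly"
  where "degree p \<le> q" and "\<And>t. (\<Sum>x\<in>cube k. \<phi> x * riesz_product t k x) = poly p t"
proof -
  define Ls where "Ls = {L. L \<subseteq> {1..k} \<and> card L \<le> q}"
  obtain c where c: "\<forall>x\<in>cube k. \<phi> x = (\<Sum>L\<in>Ls. c L * walsh L x)"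
    using assms unfolding Bkq_def Ls_def by blast
  have "finite Ls"
    unfolding Ls_def by (rule finite_subset[of _ "Pow {1..k}"]) auto
  define p where "p = (\<Sum>L\<in>Ls. monom (c L * 2 ^ k) (card L))"
  have "degree p \<le> q"
    unfolding p_def using \<open>finite Ls\<close>
    by (intro degree_sum_le) (auto simp: Ls_def intro: order.trans[OF degree_monom_le])
  moreover have "(\<Sum>x\<in>cube k. \<phi> x * riesz_product t k x) = poly p t" for t
  proof -
    have "(\<Sum>x\<in>cube k. \<phi> x * riesz_product t k x)
      = (\<Sum>L\<in>Ls. c L * (\<Sum>x\<in>cube k. riesz_product t k x * walsh L x))"
      using c by (simp add: sum_distrib_left sum_distrib_right ac_simps sum.swap[of _ Ls])
    also have "\<dots> = poly p t"
      by (simp add: p_def poly_sum poly_monom Ls_def sum_cube_riesz_product_walsh mult.assoc)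
    finally show ?thesis .
  qed
  ultimately show thesis
    using that by blast
qed

definition outer_layers :: "nat \<Rightarrow> nat \<Rightarrow> (nat \<Rightarrow> real) set" where
  "outer_layers k r = {x\<in>cube k. sign_count k 1 x \<le> r \<or> sign_count k (-1) x \<le> r}"

lemma riesz_sum_poly_if_vanishes_on_outer_layers:
  assumes "\<forall>x\<in>outer_layers k r. \<phi> x = 0"
  obtains s :: "real poly"
  where "\<And>t. (\<Sum>x\<in>cube k. \<phi> x * riesz_product t k x) = poly (([:1, 1:] * [:1, -1:]) ^ Suc r * s) t"
proof
  fix t
  \<comment> \<open>The truncated exponents are wrong only on the outer layers, where \<phi> vanishes.\<close>
  define s where "s = (\<Sum>x\<in>cube k. smult (\<phi> x)
    ([:1, 1:] ^ (sign_count k 1 x - Suc r) * [:1, -1:] ^ (sign_count k (-1) x - Suc r)))"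
  have term_eq: "\<phi> x * riesz_product t k x = ((1 + t) * (1 - t)) ^ Suc r *
      (\<phi> x * ((1 + t) ^ (sign_count k 1 x - Suc r) * (1 - t) ^ (sign_count k (-1) x - Suc r)))"
    if "x \<in> cube k" for x
  proof (cases "x \<in> outer_layers k r")
    case True
    then show ?thesis using assms by simp
  next
    case False
    then have "sign_count k 1 x = Suc r + (sign_count k 1 x - Suc r)"
      and "sign_count k (-1) x = Suc r + (sign_count k (-1) x - Suc r)"
      using that by (auto simp: outer_layers_def)
    then show ?thesis
      using riesz_product_cube[OF that]
      by (metis (no_types, lifting) mult.assoc mult.left_commute power_add power_mult_distrib)
  qed
  have "(\<Sum>x\<in>cube k. \<phi> x * riesz_product t k x) = ((1 + t) * (1 - t)) ^ Suc r *
      (\<Sum>x\<in>cube k. \<phi> x * ((1 + t) ^ (sign_count k 1 x - Suc r) * (1 - t) ^ (sign_count k (-1) x - Suc r)))"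
    unfolding sum_distrib_left by (rule sum.cong[OF refl term_eq])
  also have "\<dots> = poly (([:1, 1:] * [:1, -1:]) ^ Suc r * s) t"
  proof -
    have "poly ([:1, 1:] * [:1, -1:]) t = (1 + t) * (1 - t)"
      by (simp add: algebra_simps)
    moreover have "poly s t = (\<Sum>x\<in>cube k. \<phi> x *
        ((1 + t) ^ (sign_count k 1 x - Suc r) * (1 - t) ^ (sign_count k (-1) x - Suc r)))"
      by (simp add: s_def poly_sum)
    ultimately show ?thesis
      by (simp only: poly_mult poly_power)
  qed
  finally show "(\<Sum>x\<in>cube k. \<phi> x * riesz_product t k x) = poly (([:1, 1:] * [:1, -1:]) ^ Suc r * s) t" .
qed

lemma sum_eq_0_if_vanishes_on_outer_layers:
  assumes "\<phi> \<in> Bkq k q" and "q \<le> 2 * r + 1" and "\<forall>x\<in>outer_layers k r. \<phi> x = 0"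
  shows "(\<Sum>x\<in>cube k. \<phi> x) = 0"
proof -
  obtain p where deg_p: "degree p \<le> q"
    and p: "\<And>t. (\<Sum>x\<in>cube k. \<phi> x * riesz_product t k x) = poly p t"
    using Bkq_riesz_sum_poly[OF assms(1)] by blast
  define d :: "real poly" where "d = ([:1, 1:] * [:1, -1:]) ^ Suc r"
  obtain s where "\<And>t. (\<Sum>x\<in>cube k. \<phi> x * riesz_product t k x) = poly (d * s) t"
    using riesz_sum_poly_if_vanishes_on_outer_layers[OF assms(3)] unfolding d_def by blast
  with p have "d dvd p"
    by (metis dvd_triv_left poly_eq_poly_eq_iff ext)
  moreover have "degree d = Suc r * degree ([:1, 1:] * [:1, -1::real:])"
    unfolding d_def by (rule degree_power_eq) simp
  moreover have "degree ([:1, 1:] * [:1, -1::real:]) = 2"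
    by simp
  ultimately have "p = 0"
    using dvd_imp_degree_le[of d p] deg_p assms(2) by (cases "p = 0") auto
  have "(\<Sum>x\<in>cube k. \<phi> x) = (\<Sum>x\<in>cube k. \<phi> x * riesz_product 0 k x)"
    by (simp add: riesz_product_def)
  also have "\<dots> = 0"
    by (simp add: p \<open>p = 0\<close>)
  finally show ?thesis .
qed

lemma uniqueness_set_outer_layers:
  assumes "q \<le> 2 * r + 1"
  shows "uniqueness_set k q (outer_layers k r)"
  unfolding uniqueness_set_def
proof (intro conjI ballI impI)
  show "outer_layers k r \<subseteq> cube k"
    by (auto simp: outer_layers_def)
  fix \<phi> x assume \<phi>: "\<phi> \<in> Bkq_plus k q" and "\<forall>x\<in>outer_layers k r. \<phi> x = 0" and "x \<in> cube k"
  then have "(\<Sum>x\<in>cube k. \<phi> x) = 0"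
    using assms by (intro sum_eq_0_if_vanishes_on_outer_layers) (auto simp: Bkq_plus_def)
  with \<phi> \<open>x \<in> cube k\<close> show "\<phi> x = 0"
    by (simp add: Bkq_plus_def sum_nonneg_eq_0_iff[OF finite_cube])
qed

lemma inj_on_sign_set:
  assumes "v = 1 \<or> v = -1"
  shows "inj_on (\<lambda>x. {j\<in>{1..k}. x j = v}) (cube k)"
proof (rule inj_onI, rule ext)
  fix x y j assume x: "x \<in> cube k" and y: "y \<in> cube k"
    and eq: "{j\<in>{1..k}. x j = v} = {j\<in>{1..k}. y j = v}"
  show "x j = y j"
  proof (cases "j \<in> {1..k}")
    case True
    have "x j = v \<longleftrightarrow> y j = v" using True eq by blast
    moreover have "x j = 1 \<or> x j = -1" "y j = 1 \<or> y j = -1"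
      using x y True unfolding cube_def by auto
    ultimately show ?thesis using assms by auto
  next
    case False
    then show ?thesis using x y by (simp add: cube_def)
  qed
qed

lemma card_subsets_card_le:
  assumes "finite A" and "A \<noteq> {}"
  shows "card {S. S \<subseteq> A \<and> card S \<le> r} \<le> (r + 1) * card A ^ r"
proof -
  have "{S. S \<subseteq> A \<and> card S \<le> r} = (\<Union>i\<le>r. {S. S \<subseteq> A \<and> card S = i})"
    by auto
  then have "card {S. S \<subseteq> A \<and> card S \<le> r} \<le> (\<Sum>i\<le>r. card {S. S \<subseteq> A \<and> card S = i})"
    by (simp add: card_UN_le)
  also have "\<dots> = (\<Sum>i\<le>r. card A choose i)"
    using assms(1) by (simp add: n_subsets)
  also have "\<dots> \<le> (\<Sum>i\<le>r. card A ^ r)"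
  proof (rule sum_mono)
    fix i assume "i \<in> {..r}"
    then have "card A ^ i \<le> card A ^ r"
      using assms by (simp add: power_increasing card_gt_0_iff Suc_leI)
    moreover have "card A choose i \<le> card A ^ i"
      by (cases "i \<le> card A") (auto simp: binomial_le_pow binomial_eq_0)
    ultimately show "card A choose i \<le> card A ^ r"
      by linarith
  qed
  finally show ?thesis
    by simp
qed

lemma card_outer_layers_le:
  assumes "k \<ge> 1"
  shows "card (outer_layers k r) \<le> 2 * (r + 1) * k ^ r"
proof -
  have card_layer: "card {x\<in>cube k. sign_count k v x \<le> r} \<le> (r + 1) * k ^ r"
    if "v = 1 \<or> v = -1" for v
  proof -
    have "card {x\<in>cube k. sign_count k v x \<le> r} \<le> card {S. S \<subseteq> {1..k} \<and> card S \<le> r}"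
      using inj_on_sign_set[OF that, of k]
      by (intro card_inj_on_le[where f = "\<lambda>x. {j\<in>{1..k}. x j = v}"])
        (auto simp: sign_count_def intro: inj_on_subset)
    also have "\<dots> \<le> (r + 1) * k ^ r"
      using card_subsets_card_le[of "{1..k}" r] assms by simp
    finally show ?thesis .
  qed
  have "outer_layers k r = {x\<in>cube k. sign_count k 1 x \<le> r} \<union> {x\<in>cube k. sign_count k (-1) x \<le> r}"
    by (auto simp: outer_layers_def)
  then have "card (outer_layers k r)
      \<le> card {x\<in>cube k. sign_count k 1 x \<le> r} + card {x\<in>cube k. sign_count k (-1) x \<le> r}"
    by (simp add: card_Un_le)
  also have "\<dots> \<le> 2 * (r + 1) * k ^ r"
    using card_layer[of 1] card_layer[of "-1"] by simp
  finally show ?thesis .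
qed

theorem theorem3:
  fixes q :: nat
  assumes "q \<ge> 1"
  shows "\<exists>C :: real. \<forall>k \<ge> q. \<exists>U. uniqueness_set k q U \<and>
           real (card U) \<le> C * real k ^ (q div 2)"
proof (rule exI, intro allI impI)
  fix k assume "k \<ge> q"
  let ?r = "q div 2"
  have "card (outer_layers k ?r) \<le> 2 * (?r + 1) * k ^ ?r"
    using \<open>k \<ge> q\<close> assms by (intro card_outer_layers_le) simp
  then have "real (card (outer_layers k ?r)) \<le> real (2 * (?r + 1)) * real k ^ ?r"
    by (metis of_nat_le_iff of_nat_mult of_nat_power)
  moreover have "uniqueness_set k q (outer_layers k ?r)"
    by (rule uniqueness_set_outer_layers) simp
  ultimately show "\<exists>U. uniqueness_set k q U \<and> real (card U) \<le> real (2 * (?r + 1)) * real k ^ ?r"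
    by blast
qed

end
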